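(* Let $X$ be a real Hilbert space and $A,B$ closed convex nonempty subsets of $X$ such that $E$ and $F$ are nonempty and bounded. Let $\{A_n\}$, $\{B_n\}$ be sequences of closed convex nonempty subsets of $X$ with $A_n\to A$ and $B_n\to B$ in the Attouch–Wets sense. Then for each $M>0$ there exist $\theta\in(0,M)$ and $n_0\in\mathbb N$ such that for every $n\ge n_0$: (i) if $b_n\in B_n$, $a_n=P_{A_n}b_n$ and $\mathrm{dist}(b_n,F)\le\theta$, then $\mathrm{dist}(a_n,E)\le 2M$; (ii) if $a_n\in A_n$, $b_{n+1}=P_{B_{n+1}}a_n$ and $\mathrm{dist}(a_n,E)\le\theta$, then $\mathrm{dist}(b_{n+1},F)\le 2M$.
   Context: $P_C$ is the metric projection onto a closed convex nonempty set $C$; $B_X$ the closed unit ball; $\mathrm{dist}(x,S)=\inf_{s\in S}\|x-s\|$, $\mathrm{dist}(S,T)=\inf_{s\in S}\mathrm{dist}(s,T)$. $E=\{a\in A:\mathrm{dist}(a,B)=\mathrm{dist}(A,B)\}$, $F=\{b\in B:\mathrm{dist}(b,A)=\mathrm{dist}(A,B)\}$. Attouch–Wets convergence: for nonempty closed $C,D$ and $N\in\mathbb N$ let $e_N(C,D)=\sup_{c\in C\cap NB_X}\mathrm{dist}(c,D)$ ($0$ if $C\cap NB_X=\emptyset$) and $h_N(C,D)=\max\{e_N(C,D),e_N(D,C)\}$; $C_j\to C$ if $\lim_j h_N(C_j,C)=0$ for every $N\in\mathbb N$. *)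

theory Defs
  imports "HOL-Analysis.Analysis"
begin

text \<open>Metric projection onto a set C (in a Hilbert space, for C closed convex nonempty,
  the minimiser exists and is unique).\<close>
definition metric_proj :: "'a::real_inner set \<Rightarrow> 'a \<Rightarrow> 'a" where
  "metric_proj C x = (SOME p. p \<in> C \<and> (\<forall>y\<in>C. dist x p \<le> dist x y))"

definition best_E :: "'a::metric_space set \<Rightarrow> 'a set \<Rightarrow> 'a set" where
  "best_E A B = {a \<in> A. infdist a B = setdist A B}"

definition aw_excess :: "nat \<Rightarrow> 'a::real_normed_vector set \<Rightarrow> 'a set \<Rightarrow> real" where
  "aw_excess N C D =
     (if C \<inter> cball 0 (real N) = {} then 0
      else Sup ((\<lambda>c. infdist c D) ` (C \<inter> cball 0 (real N))))"

definition aw_dist :: "nat \<Rightarrow> 'a::real_normed_vector set \<Rightarrow> 'a set \<Rightarrow> real" where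
  "aw_dist N C D = max (aw_excess N C D) (aw_excess N D C)"

definition aw_converges :: "(nat \<Rightarrow> 'a::real_normed_vector set) \<Rightarrow> 'a set \<Rightarrow> bool" where
  "aw_converges Cs C \<longleftrightarrow> (\<forall>N::nat. (\<lambda>j. aw_dist N (Cs j) C) \<longlonglongrightarrow> 0)"

end

theory Submission
  imports Defs
begin

text \<open>Given b with dist(b, F) small, pick f \<in> F near b and let e = P_A f; then e \<in> E and
  |f - e| = dist(A,B). Attouch-Wets convergence on a ball containing all points involved
  yields c \<in> A_n near e, so |b - c| \<le> dist(A,B) + small, and, since q = P(A_n) b is near A,
  also |b - q| \<ge> dist(A,B) - small. For the nearest point q of a convex set the parallelogram
  law gives |c - q|^2 \<le> 2 (|b - c|^2 - |b - q|^2), which is therefore small: q is near c,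
  hence near e \<in> E. Part (ii) is part (i) with A and B exchanged, for the sequence B_(n+1).\<close>

lemma infdist_lessE:
  assumes "A \<noteq> {}" "infdist x A < r"
  obtains a where "a \<in> A" "dist x a < r"
  using assms by (auto simp: infdist_notempty cINF_less_iff)

lemma parallelogram_law:
  fixes x y :: "'a::real_inner"
  shows "norm (x + y)^2 + norm (x - y)^2 = 2 * norm x^2 + 2 * norm y^2"
  by (simp add: power2_norm_eq_inner inner_add_left inner_add_right inner_diff_left
      inner_diff_right inner_commute)

lemma convex_norm_diff_sq_le:
  fixes x y z :: "'a::real_inner"
  assumes "convex C" "y \<in> C" "z \<in> C"
  shows "norm (y - z)^2 \<le> 2 * dist x y^2 + 2 * dist x z^2 - 4 * infdist x C^2"
proof -
  define m where "m = (1/2) *\<^sub>R y + (1/2) *\<^sub>R z"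
  have "m \<in> C" using assms by (simp add: m_def convexD)
  then have "infdist x C^2 \<le> norm (x - m)^2"
    by (simp add: infdist_le infdist_nonneg power_mono flip: dist_norm)
  moreover have "(x - y) + (x - z) = 2 *\<^sub>R (x - m)"
    by (simp add: m_def algebra_simps scaleR_2)
  then have "4 * norm (x - m)^2 + norm (y - z)^2 = 2 * dist x y^2 + 2 * dist x z^2"
    using parallelogram_law[of "x - y" "x - z"]
    by (simp add: power_mult_distrib dist_norm norm_minus_commute)
  ultimately show ?thesis by linarith
qed

lemma convex_diameter_cball_le:
  fixes x y z :: "'a::real_inner"
  assumes "convex C" "y \<in> C" "z \<in> C" "dist x y \<le> r" "dist x z \<le> r"
  shows "norm (y - z)^2 \<le> 4 * (r^2 - infdist x C^2)"
proof -
  have "dist x y^2 \<le> r^2" "dist x z^2 \<le> r^2"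
    using assms(4,5) by (simp_all add: power_mono)
  then show ?thesis using convex_norm_diff_sq_le[OF assms(1-3), where x=x]
    by (simp add: right_diff_distrib)
qed

lemma nearest_point_exists:
  fixes C :: "'a::{real_inner, complete_space} set"
  assumes "closed C" "convex C" "C \<noteq> {}"
  obtains p where "p \<in> C" "\<And>y. y \<in> C \<Longrightarrow> dist x p \<le> dist x y"
proof -
  define \<delta> where "\<delta> = infdist x C"
  define r :: "nat \<Rightarrow> real" where "r n = \<delta> + 1 / Suc n" for n
  define S where "S n = C \<inter> cball x (r n)" for n
  \<comment> \<open>Cantor's intersection theorem: by the parallelogram law the diameters of S n tend to 0.\<close>
  have r_lim: "r \<longlonglongrightarrow> \<delta>"
    unfolding r_def using tendsto_add[OF tendsto_const LIMSEQ_Suc[OF lim_const_over_n[of 1]]]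
    by simp
  have "closed (S n)" for n
    using assms(1) by (simp add: S_def closed_Int)
  moreover have "S n \<noteq> {}" for n
  proof -
    have "infdist x C < r n" by (simp add: r_def \<delta>_def)
    with assms(3) obtain y where "y \<in> C" "dist x y < r n" by (rule infdist_lessE)
    then show ?thesis by (auto simp: S_def)
  qed
  moreover have "S n \<subseteq> S m" if "m \<le> n" for m n
  proof -
    have "r n \<le> r m"
      unfolding r_def using that by (intro add_left_mono frac_le) simp_all
    then show ?thesis by (auto simp: S_def)
  qed
  moreover have "\<exists>n. \<forall>y\<in>S n. \<forall>z\<in>S n. dist y z < \<epsilon>" if "\<epsilon> > 0" for \<epsilon>
  proof -
    have "(\<lambda>n. 4 * (r n^2 - \<delta>^2)) \<longlonglongrightarrow> 4 * (\<delta>^2 - \<delta>^2)"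
      by (intro tendsto_intros r_lim)
    then have "\<forall>\<^sub>F n in sequentially. 4 * (r n^2 - \<delta>^2) < \<epsilon>^2"
      using \<open>\<epsilon> > 0\<close> by (intro order_tendstoD(2)) auto
    then obtain n where n: "4 * (r n^2 - \<delta>^2) < \<epsilon>^2"
      using eventually_sequentially by auto
    have "dist y z < \<epsilon>" if "y \<in> S n" "z \<in> S n" for y z
    proof -
      have "norm (y - z)^2 < \<epsilon>^2"
        using that convex_diameter_cball_le[OF assms(2), of y z x "r n"] n
        by (auto simp: S_def \<delta>_def)
      then show ?thesis using \<open>\<epsilon> > 0\<close> by (simp add: dist_norm power_less_imp_less_base)
    qed
    then show ?thesis by blast
  qed
  ultimately obtain p where p: "\<And>n. p \<in> S n"
    using decreasing_closed_nest[of S] by metis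
  have "dist x p \<le> \<delta>"
    using p by (intro LIMSEQ_le_const[OF r_lim]) (auto simp: S_def)
  moreover have "p \<in> C" using p by (simp add: S_def)
  ultimately show thesis
    using that infdist_le[of _ C x] unfolding \<delta>_def by force
qed

lemma
  fixes C :: "'a::{real_inner, complete_space} set"
  assumes "closed C" "convex C" "C \<noteq> {}"
  shows metric_proj_in: "metric_proj C x \<in> C"
    and metric_proj_le: "y \<in> C \<Longrightarrow> dist x (metric_proj C x) \<le> dist x y"
proof -
  obtain p where "p \<in> C" "\<And>y. y \<in> C \<Longrightarrow> dist x p \<le> dist x y"
    using nearest_point_exists[OF assms] by blast
  then have "\<exists>p. p \<in> C \<and> (\<forall>y\<in>C. dist x p \<le> dist x y)" by blast
  then have "metric_proj C x \<in> C \<and> (\<forall>y\<in>C. dist x (metric_proj C x) \<le> dist x y)"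
    unfolding metric_proj_def by (rule someI_ex)
  then show "metric_proj C x \<in> C" "y \<in> C \<Longrightarrow> dist x (metric_proj C x) \<le> dist x y"
    by auto
qed

lemma dist_metric_proj:
  fixes C :: "'a::{real_inner, complete_space} set"
  assumes "closed C" "convex C" "C \<noteq> {}"
  shows "dist x (metric_proj C x) = infdist x C"
proof (rule antisym)
  show "dist x (metric_proj C x) \<le> infdist x C"
    unfolding infdist_notempty[OF assms(3)]
    by (rule cINF_greatest[OF assms(3)]) (rule metric_proj_le[OF assms])
qed (rule infdist_le[OF metric_proj_in[OF assms]])

lemma norm_diff_metric_proj_sq_le:
  fixes C :: "'a::{real_inner, complete_space} set"
  assumes "closed C" "convex C" "C \<noteq> {}" "c \<in> C"
  shows "norm (c - metric_proj C x)^2 \<le> 2 * (dist x c^2 - dist x (metric_proj C x)^2)"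
  using convex_norm_diff_sq_le[OF assms(2,4) metric_proj_in[OF assms(1-3), of x], where x=x]
  unfolding dist_metric_proj[OF assms(1-3)] by (simp add: right_diff_distrib)

lemma metric_proj_best_E:
  fixes A :: "'a::{real_inner, complete_space} set"
  assumes "closed A" "convex A" "A \<noteq> {}" "f \<in> best_E B A"
  shows "metric_proj A f \<in> best_E A B" "dist f (metric_proj A f) = setdist A B"
proof -
  let ?e = "metric_proj A f"
  have "f \<in> B" "infdist f A = setdist A B"
    using assms(4) setdist_sym[of B A] by (auto simp: best_E_def)
  then show eq: "dist f ?e = setdist A B"
    by (simp add: dist_metric_proj[OF assms(1-3)])
  have "infdist ?e B \<le> setdist A B"
    using infdist_le[OF \<open>f \<in> B\<close>, of ?e] eq by (simp add: dist_commute)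
  moreover have "setdist A B \<le> infdist ?e B"
    using metric_proj_in[OF assms(1-3)] by (simp add: infdist_eq_setdist setdist_le_sing)
  ultimately show "?e \<in> best_E A B"
    using metric_proj_in[OF assms(1-3)] by (simp add: best_E_def)
qed

lemma infdist_le_aw_excess:
  fixes x :: "'a::real_normed_vector"
  assumes "x \<in> C" "norm x \<le> real N" "D \<noteq> {}"
  shows "infdist x D \<le> aw_excess N C D"
proof -
  obtain d where "d \<in> D" using assms(3) by blast
  have "bdd_above ((\<lambda>c. infdist c D) ` (C \<inter> cball 0 (real N)))"
  proof (rule bdd_aboveI2)
    fix c assume "c \<in> C \<inter> cball 0 (real N)"
    then show "infdist c D \<le> real N + norm d"
      using infdist_le[OF \<open>d \<in> D\<close>, of c] norm_triangle_ineq4[of c d]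
      by (simp add: dist_norm)
  qed
  then show ?thesis
    using assms by (auto simp: aw_excess_def intro!: cSup_upper)
qed

lemma aw_converges_eventually_infdist_less:
  assumes "aw_converges Cs C" "C \<noteq> {}" "\<And>n. Cs n \<noteq> {}" "0 < \<eta>"
  shows "\<forall>\<^sub>F n in sequentially.
           (\<forall>x\<in>C. norm x \<le> real N \<longrightarrow> infdist x (Cs n) < \<eta>) \<and>
           (\<forall>x\<in>Cs n. norm x \<le> real N \<longrightarrow> infdist x C < \<eta>)"
proof -
  have "\<forall>\<^sub>F n in sequentially. aw_dist N (Cs n) C < \<eta>"
    using assms(1,4) unfolding aw_converges_def by (auto dest: order_tendstoD(2))
  then show ?thesis
  proof eventually_elim
    case (elim n)
    then show ?case
      using infdist_le_aw_excess[of _ C N "Cs n"] infdist_le_aw_excess[of _ "Cs n" N C] assms(2,3)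
      by (fastforce simp: aw_dist_def)
  qed
qed

lemma infdist_metric_proj_best_E_le:
  fixes A C :: "'a::{real_inner, complete_space} set"
  assumes A: "closed A" "convex A" "A \<noteq> {}"
    and C: "closed C" "convex C" "C \<noteq> {}"
    and f: "f \<in> best_E B A" "dist b f \<le> t"
    and "0 < \<eta>"
    and AC: "\<And>x. x \<in> A \<Longrightarrow> norm x \<le> N \<Longrightarrow> infdist x C < \<eta>"
    and CA: "\<And>x. x \<in> C \<Longrightarrow> norm x \<le> N \<Longrightarrow> infdist x A < \<eta>"
    and N: "norm f + setdist A B + 2 * t + 2 * \<eta> \<le> N"
  shows "infdist (metric_proj C b) (best_E A B)
           \<le> sqrt (8 * (t + \<eta>) * (setdist A B + t + \<eta>)) + \<eta>"
proof -
  define d where "d = setdist A B"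
  define e where "e = metric_proj A f"
  define q where "q = metric_proj C b"
  have eE: "e \<in> best_E A B" and fe: "dist f e = d"
    using metric_proj_best_E[OF A f(1)] by (simp_all add: e_def d_def)
  have "0 \<le> t" using f(2) zero_le_dist[of b f] by linarith
  have "norm e \<le> N"
    using norm_triangle_sub[of e f, folded dist_norm] dist_commute[of e f]
      fe N \<open>0 \<le> t\<close> \<open>0 < \<eta>\<close>
    unfolding d_def by linarith
  moreover have "e \<in> A" using eE by (simp add: best_E_def)
  ultimately obtain c where c: "c \<in> C" "dist e c < \<eta>"
    using AC C(3) infdist_lessE by metis
  have q: "q \<in> C" "dist b q \<le> dist b c"
    using metric_proj_in[OF C] metric_proj_le[OF C c(1)] by (simp_all add: q_def)
  have bc: "dist b c \<le> t + d + \<eta>"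
    using dist_triangle[of b c f] dist_triangle[of f c e] f(2) fe c(2) by linarith
  have "norm q \<le> N"
    using norm_triangle_sub[of q f, folded dist_norm] dist_triangle[of q f b]
      dist_commute[of q b] f(2) q(2) bc N \<open>0 < \<eta>\<close>
    unfolding d_def by linarith
  then obtain a where "a \<in> A" "dist q a < \<eta>"
    using CA q(1) A(3) infdist_lessE by metis
  have bq: "d - t - \<eta> \<le> dist b q"
    using metric_proj_le[OF A \<open>a \<in> A\<close>, of f] dist_triangle[of f a b]
      dist_triangle[of b a q] f(2) fe \<open>dist q a < \<eta>\<close>
    by (simp add: e_def dist_commute)
  have "norm (c - q)^2 \<le> 2 * (dist b c^2 - dist b q^2)"
    unfolding q_def by (rule norm_diff_metric_proj_sq_le[OF C c(1)])
  also have "\<dots> = 2 * ((dist b c - dist b q) * (dist b c + dist b q))"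
    by (simp add: power2_eq_square algebra_simps)
  also have "\<dots> \<le> 2 * ((2 * (t + \<eta>)) * (2 * (d + t + \<eta>)))"
    using bc bq q(2) by (intro mult_left_mono mult_mono) auto
  finally have "norm (c - q) \<le> sqrt (8 * (t + \<eta>) * (d + t + \<eta>))"
    by (intro real_le_rsqrt) (simp add: algebra_simps)
  moreover have "infdist q (best_E A B) \<le> dist q c + dist c e"
    using infdist_le[OF eE, of q] dist_triangle[of q e c] by linarith
  ultimately show ?thesis
    using c(2) by (simp add: q_def d_def dist_norm norm_minus_commute)
qed

lemma eventually_metric_proj_near_best_E:
  fixes A :: "'a::{real_inner, complete_space} set" and Cs :: "nat \<Rightarrow> 'a set"
  assumes A: "closed A" "convex A" "A \<noteq> {}"
    and F: "best_E B A \<noteq> {}" "bounded (best_E B A)"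
    and Cs: "\<And>n. closed (Cs n) \<and> convex (Cs n) \<and> Cs n \<noteq> {}"
    and conv: "aw_converges Cs A"
    and M: "0 < M"
  shows "\<exists>\<theta>>0. \<theta> < M \<and>
           (\<forall>\<^sub>F n in sequentially. \<forall>b. infdist b (best_E B A) \<le> \<theta> \<longrightarrow>
              infdist (metric_proj (Cs n) b) (best_E A B) \<le> 2 * M)"
proof -
  define d where "d = setdist A B"
  obtain R where R: "\<And>f. f \<in> best_E B A \<Longrightarrow> norm f \<le> R"
    using F(2) bounded_iff by blast
  define \<tau> where "\<tau> = min (M / 2) (M^2 / (24 * (d + 2 * M)))"
  define N where "N = nat \<lceil>R + d + 6 * \<tau>\<rceil>"
  have "0 < d + 2 * M" unfolding d_def using M setdist_pos_le[of A B] by linarith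
  have \<tau>: "0 < \<tau>" "\<tau> \<le> M / 2" "\<tau> * (24 * (d + 2 * M)) \<le> M^2"
  proof -
    show "0 < \<tau>" using M \<open>0 < d + 2 * M\<close> by (simp add: \<tau>_def)
    show "\<tau> \<le> M / 2" unfolding \<tau>_def by (rule min.cobounded1)
    have "\<tau> \<le> M^2 / (24 * (d + 2 * M))" unfolding \<tau>_def by (rule min.cobounded2)
    then show "\<tau> * (24 * (d + 2 * M)) \<le> M^2"
      using \<open>0 < d + 2 * M\<close> by (simp add: pos_le_divide_eq)
  qed
  have bound: "8 * (2 * \<tau> + \<tau>) * (d + 2 * \<tau> + \<tau>) \<le> M^2"
  proof -
    have "8 * (2 * \<tau> + \<tau>) * (d + 2 * \<tau> + \<tau>) = 24 * \<tau> * (d + 3 * \<tau>)"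
      by (simp add: algebra_simps)
    also have "\<dots> \<le> 24 * \<tau> * (d + 2 * M)"
      using \<tau>(1,2) by (intro mult_left_mono) auto
    finally show ?thesis using \<tau>(3) by (simp add: algebra_simps)
  qed
  have "\<forall>\<^sub>F n in sequentially.
          (\<forall>x\<in>A. norm x \<le> real N \<longrightarrow> infdist x (Cs n) < \<tau>) \<and>
          (\<forall>x\<in>Cs n. norm x \<le> real N \<longrightarrow> infdist x A < \<tau>)"
    using Cs by (intro aw_converges_eventually_infdist_less[OF conv A(3) _ \<tau>(1)]) blast
  then have "\<forall>\<^sub>F n in sequentially. \<forall>b. infdist b (best_E B A) \<le> \<tau> \<longrightarrow>
               infdist (metric_proj (Cs n) b) (best_E A B) \<le> 2 * M"
  proof eventually_elim
    case (elim n)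
    have Cn: "closed (Cs n)" "convex (Cs n)" "Cs n \<noteq> {}" using Cs by auto
    have AC: "\<And>x. x \<in> A \<Longrightarrow> norm x \<le> real N \<Longrightarrow> infdist x (Cs n) < \<tau>"
      and CA: "\<And>x. x \<in> Cs n \<Longrightarrow> norm x \<le> real N \<Longrightarrow> infdist x A < \<tau>"
      using elim by blast+
    show ?case
    proof (intro allI impI)
      fix b assume "infdist b (best_E B A) \<le> \<tau>"
      then have "infdist b (best_E B A) < 2 * \<tau>" using \<tau>(1) by linarith
      with F(1) obtain f where f: "f \<in> best_E B A" "dist b f < 2 * \<tau>"
        by (rule infdist_lessE)
      have "norm f + setdist A B + 2 * (2 * \<tau>) + 2 * \<tau> \<le> real N"
        using R[OF f(1)] real_nat_ceiling_ge[of "R + d + 6 * \<tau>"] by (simp add: N_def d_def)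
      with AC CA have "infdist (metric_proj (Cs n) b) (best_E A B)
                   \<le> sqrt (8 * (2 * \<tau> + \<tau>) * (d + 2 * \<tau> + \<tau>)) + \<tau>"
        unfolding d_def by (rule infdist_metric_proj_best_E_le[OF A Cn f(1) less_imp_le[OF f(2)] \<tau>(1)])
      also have "\<dots> \<le> M + M"
        using bound M \<tau>(2) real_le_lsqrt[of M] by (intro add_mono) auto
      finally show "infdist (metric_proj (Cs n) b) (best_E A B) \<le> 2 * M" by simp
    qed
  qed
  then show ?thesis using \<tau>(1,2) M by (intro exI[of _ \<tau>]) auto
qed

theorem proposition4p9:
  fixes A B :: "'a::{real_inner, complete_space} set"
    and An Bn :: "nat \<Rightarrow> 'a set"
  assumes "closed A" "convex A" "A \<noteq> {}"
    and "closed B" "convex B" "B \<noteq> {}"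
    and "best_E A B \<noteq> {}" "bounded (best_E A B)"
    and "best_E B A \<noteq> {}" "bounded (best_E B A)"
    and "\<And>n. closed (An n) \<and> convex (An n) \<and> An n \<noteq> {}"
    and "\<And>n. closed (Bn n) \<and> convex (Bn n) \<and> Bn n \<noteq> {}"
    and "aw_converges An A" "aw_converges Bn B"
  shows "\<forall>M>0. \<exists>\<theta> n0. 0 < \<theta> \<and> \<theta> < M \<and>
           (\<forall>n\<ge>n0.
              (\<forall>b\<in>Bn n. infdist b (best_E B A) \<le> \<theta> \<longrightarrow>
                  infdist (metric_proj (An n) b) (best_E A B) \<le> 2 * M) \<and>
              (\<forall>a\<in>An n. infdist a (best_E A B) \<le> \<theta> \<longrightarrow>
                  infdist (metric_proj (Bn (Suc n)) a) (best_E B A) \<le> 2 * M))"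
proof (intro allI impI)
  fix M :: real assume "0 < M"
  have "aw_converges (\<lambda>n. Bn (Suc n)) B"
    using assms(14) unfolding aw_converges_def by (auto intro: LIMSEQ_Suc)
  then obtain \<theta>\<^sub>B where "0 < \<theta>\<^sub>B" "\<theta>\<^sub>B < M" and ev\<^sub>B:
    "\<forall>\<^sub>F n in sequentially. \<forall>a. infdist a (best_E A B) \<le> \<theta>\<^sub>B \<longrightarrow>
       infdist (metric_proj (Bn (Suc n)) a) (best_E B A) \<le> 2 * M"
    using eventually_metric_proj_near_best_E[of B A "\<lambda>n. Bn (Suc n)" M] assms \<open>0 < M\<close> by blast
  obtain \<theta>\<^sub>A where "0 < \<theta>\<^sub>A" "\<theta>\<^sub>A < M" and ev\<^sub>A:
    "\<forall>\<^sub>F n in sequentially. \<forall>b. infdist b (best_E B A) \<le> \<theta>\<^sub>A \<longrightarrow>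
       infdist (metric_proj (An n) b) (best_E A B) \<le> 2 * M"
    using eventually_metric_proj_near_best_E[of A B An M] assms \<open>0 < M\<close> by blast
  from eventually_conj[OF ev\<^sub>A ev\<^sub>B] obtain n0 where
    "\<And>n. n \<ge> n0 \<Longrightarrow>
       (\<forall>b. infdist b (best_E B A) \<le> \<theta>\<^sub>A \<longrightarrow>
          infdist (metric_proj (An n) b) (best_E A B) \<le> 2 * M) \<and>
       (\<forall>a. infdist a (best_E A B) \<le> \<theta>\<^sub>B \<longrightarrow>
          infdist (metric_proj (Bn (Suc n)) a) (best_E B A) \<le> 2 * M)"
    unfolding eventually_sequentially by blast
  then show "\<exists>\<theta> n0. 0 < \<theta> \<and> \<theta> < M \<and>
           (\<forall>n\<ge>n0.
              (\<forall>b\<in>Bn n. infdist b (best_E B A) \<le> \<theta> \<longrightarrow>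
                  infdist (metric_proj (An n) b) (best_E A B) \<le> 2 * M) \<and>
              (\<forall>a\<in>An n. infdist a (best_E A B) \<le> \<theta> \<longrightarrow>
                  infdist (metric_proj (Bn (Suc n)) a) (best_E B A) \<le> 2 * M))"
    using \<open>0 < \<theta>\<^sub>A\<close> \<open>\<theta>\<^sub>A < M\<close> \<open>0 < \<theta>\<^sub>B\<close>
    by (intro exI[of _ "min \<theta>\<^sub>A \<theta>\<^sub>B"] exI[of _ n0]) auto
qed

end
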